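(* Fix a start state $x_0$, a finite set $\mathcal{D}$ of demonstrations, each a pair $(\tilde x_{0:T},\tilde a_{0:T-1})$ with $\tilde x_0=x_0$, a constraint candidate $C=(\psi,C_A)$, and a state $x^*$. For $p\in[0,1]$ let $C_p=(\psi_p,C_A)$ where $\psi_p(x^* )=p$ and $\psi_p(x)=\psi(x)$ for $x\neq x^*$. Call $C_p$ consistent with $\mathcal{D}$ if $\Phi_{C_p}(\tilde a_t,\tilde x_t)=1$ for every demonstration in $\mathcal{D}$ and every $t\in\{0,\dots,T-1\}$. Suppose $C_1$ is consistent with $\mathcal{D}$ and let $p^*=\max_{(\tilde x,\tilde a)\in\mathcal{D}}\max_{0\le t\le T-1}S(\tilde x_t,\tilde a_t,x^* )$. Then $C_p$ is consistent with $\mathcal{D}$ if and only if $p\ge p^*$, and for every $p\ge p^*$, $V^{soft}_{C_{p^*},0}(x_0)\le V^{soft}_{C_p,0}(x_0)$; equivalently (for any baseline $C^0$ with finite soft values) $F_{C_{p^*},0}(x_0)\le F_{C_p,0}(x_0)$, so that among all consistent $C_p$ the candidate $C_{p^*}$ maximizes the likelihood $\prod_{\text{demos}} e^{\mathbb{E}[R]}/e^{V^{soft}_{C_p,0}(x_0)}$ of the demonstrations.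
   Context: Finite state set $\mathcal{X}$, finite action set $\mathcal{A}$, horizon $T$, transition probabilities $S(x,a,x')$, running reward $r(x,a)$, terminal reward $w(x)$; the (expected) demonstration reward is $\mathbb{E}[R]=\mathbb{E}[\sum_{t=0}^{T-1}r(X_t,a_t)+w(X_T)]$, which does not depend on the constraint candidate. A constraint candidate $C=(\psi,C_A)$ with $\psi:\mathcal{X}\to[0,1]$, $C_A\subseteq\mathcal{A}$; $\Phi_C(a,x)=1$ iff $a\notin C_A$ and $S(x,a,\hat x)\le\psi(\hat x)$ for all $\hat x\in\mathcal{X}$ (else $0$); $W_C(x)=\{a:\Phi_C(a,x)=1\}$. Soft values (in the extended reals, $\log 0=-\infty$, $e^{-\infty}=0$, $0\cdot(-\infty)=0$): $V^{soft}_{C,T}(x)=w(x)$; $Q^{soft}_{C,t}(a,x)=r(x,a)+\sum_{x'}S(x,a,x')V^{soft}_{C,t+1}(x')$; $V^{soft}_{C,t}(x)=\log\sum_{a\in W_C(x)}e^{Q^{soft}_{C,t}(a,x)}$. $F_{C,t}(x)=\exp(V^{soft}_{C,t}(x)-V^{soft}_{C^0,t}(x))$ for a baseline candidate $C^0$. *)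

theory Defs
  imports "HOL-Analysis.Analysis"
begin

definition Phi :: "('x::finite \<Rightarrow> 'a \<Rightarrow> 'x \<Rightarrow> real) \<Rightarrow> ('x \<Rightarrow> real) \<Rightarrow> 'a set \<Rightarrow> 'a \<Rightarrow> 'x \<Rightarrow> bool" where
  "Phi S psi CA a x \<longleftrightarrow> a \<notin> CA \<and> (\<forall>xh. S x a xh \<le> psi xh)"

definition W :: "('x::finite \<Rightarrow> 'a \<Rightarrow> 'x \<Rightarrow> real) \<Rightarrow> ('x \<Rightarrow> real) \<Rightarrow> 'a set \<Rightarrow> 'x \<Rightarrow> 'a set" where
  "W S psi CA x = {a. Phi S psi CA a x}"

text \<open>log-sum-exp in the extended reals: log of the sum of exp(f a) over A,
  with exp(-infinity) = 0 and log 0 = -infinity.\<close>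
definition lse :: "'a set \<Rightarrow> ('a \<Rightarrow> ereal) \<Rightarrow> ereal" where
  "lse A f = (let B = {a \<in> A. f a \<noteq> -\<infinity>} in
     if B = {} then -\<infinity> else ereal (ln (\<Sum>a\<in>B. exp (real_of_ereal (f a)))))"

text \<open>Soft value with n steps remaining (n = T - t).\<close>
fun Vrem :: "('x::finite \<Rightarrow> 'a::finite \<Rightarrow> 'x \<Rightarrow> real) \<Rightarrow> ('x \<Rightarrow> 'a \<Rightarrow> real) \<Rightarrow> ('x \<Rightarrow> real)
     \<Rightarrow> ('x \<Rightarrow> real) \<Rightarrow> 'a set \<Rightarrow> nat \<Rightarrow> 'x \<Rightarrow> ereal" where
  "Vrem S r w psi CA 0 x = ereal (w x)"
| "Vrem S r w psi CA (Suc n) x =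
     lse (W S psi CA x)
       (\<lambda>a. ereal (r x a) + (\<Sum>x'\<in>UNIV. ereal (S x a x') * Vrem S r w psi CA n x'))"

definition Qsoft :: "('x::finite \<Rightarrow> 'a::finite \<Rightarrow> 'x \<Rightarrow> real) \<Rightarrow> ('x \<Rightarrow> 'a \<Rightarrow> real) \<Rightarrow> ('x \<Rightarrow> real)
     \<Rightarrow> nat \<Rightarrow> ('x \<Rightarrow> real) \<Rightarrow> 'a set \<Rightarrow> nat \<Rightarrow> 'a \<Rightarrow> 'x \<Rightarrow> ereal" where
  "Qsoft S r w T psi CA t a x =
     ereal (r x a) + (\<Sum>x'\<in>UNIV. ereal (S x a x') * Vrem S r w psi CA (T - Suc t) x')"

definition Vsoft :: "('x::finite \<Rightarrow> 'a::finite \<Rightarrow> 'x \<Rightarrow> real) \<Rightarrow> ('x \<Rightarrow> 'a \<Rightarrow> real) \<Rightarrow> ('x \<Rightarrow> real)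
     \<Rightarrow> nat \<Rightarrow> ('x \<Rightarrow> real) \<Rightarrow> 'a set \<Rightarrow> nat \<Rightarrow> 'x \<Rightarrow> ereal" where
  "Vsoft S r w T psi CA t x = Vrem S r w psi CA (T - t) x"

text \<open>F_{C,t}(x) = exp(V_C - V_{C0}) (baseline value assumed finite; exp(-infinity) = 0).\<close>
definition Fsoft :: "('x::finite \<Rightarrow> 'a::finite \<Rightarrow> 'x \<Rightarrow> real) \<Rightarrow> ('x \<Rightarrow> 'a \<Rightarrow> real) \<Rightarrow> ('x \<Rightarrow> real)
     \<Rightarrow> nat \<Rightarrow> ('x \<Rightarrow> real) \<Rightarrow> 'a set \<Rightarrow> ('x \<Rightarrow> real) \<Rightarrow> 'a set \<Rightarrow> nat \<Rightarrow> 'x \<Rightarrow> real" where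
  "Fsoft S r w T psi CA psi0 CA0 t x =
     (if Vsoft S r w T psi CA t x = -\<infinity> then 0
      else exp (real_of_ereal (Vsoft S r w T psi CA t x) - real_of_ereal (Vsoft S r w T psi0 CA0 t x)))"

definition consistent :: "('x::finite \<Rightarrow> 'a \<Rightarrow> 'x \<Rightarrow> real) \<Rightarrow> nat \<Rightarrow> ('x \<Rightarrow> real) \<Rightarrow> 'a set
     \<Rightarrow> ((nat \<Rightarrow> 'x) \<times> (nat \<Rightarrow> 'a)) set \<Rightarrow> bool" where
  "consistent S T psi CA D \<longleftrightarrow> (\<forall>(xs, as) \<in> D. \<forall>t<T. Phi S psi CA (as t) (xs t))"

end

theory Submission
  imports Defs
begin

text \<open>Raising the threshold \<open>psi\<close> at one state only enlarges every admissible action set, and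
  log-sum-exp is monotone both in the index set and in the summands, so the soft value is
  monotone in \<open>psi\<close>. The demonstrations stay admissible exactly as long as the threshold at
  \<open>xstar\<close> dominates every transition probability into \<open>xstar\<close> they use, so the least consistent
  threshold is \<open>pstar\<close> and it gives the least soft value.\<close>

lemma lse_neq_PInf: "lse A f \<noteq> \<infinity>"
  unfolding lse_def Let_def by auto

lemma Vrem_neq_PInf: "Vrem S r w psi CA n x \<noteq> \<infinity>"
  by (cases n) (auto simp: lse_neq_PInf)

lemma lse_mono:
  fixes f g :: "'a \<Rightarrow> ereal"
  assumes AB: "A \<subseteq> B" and fin: "finite B" and fg: "\<forall>a\<in>A. f a \<le> g a"
    and g_fin: "\<forall>a\<in>B. g a \<noteq> \<infinity>" and f_fin: "\<forall>a\<in>A. f a \<noteq> \<infinity>"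
  shows "lse A f \<le> lse B g"
proof -
  define A' where "A' = {a\<in>A. f a \<noteq> -\<infinity>}"
  define B' where "B' = {a\<in>B. g a \<noteq> -\<infinity>}"
  show ?thesis
  proof (cases "A' = {}")
    case True
    then show ?thesis unfolding lse_def Let_def A'_def[symmetric] by simp
  next
    case False
    have sub: "A' \<subseteq> B'" unfolding A'_def B'_def using AB fg by force
    have fin_B': "finite B'" using fin unfolding B'_def by auto
    have "(\<Sum>a\<in>A'. exp (real_of_ereal (f a))) \<le> (\<Sum>a\<in>A'. exp (real_of_ereal (g a)))"
    proof (rule sum_mono)
      fix a assume "a \<in> A'"
      then have "f a \<noteq> -\<infinity>" "f a \<noteq> \<infinity>" "f a \<le> g a" "g a \<noteq> \<infinity>"
        using f_fin fg g_fin AB unfolding A'_def by auto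
      then show "exp (real_of_ereal (f a)) \<le> exp (real_of_ereal (g a))"
        by (cases "f a"; cases "g a") auto
    qed
    also have "\<dots> \<le> (\<Sum>a\<in>B'. exp (real_of_ereal (g a)))"
      by (rule sum_mono2[OF fin_B' sub]) auto
    finally have le: "(\<Sum>a\<in>A'. exp (real_of_ereal (f a))) \<le> (\<Sum>a\<in>B'. exp (real_of_ereal (g a)))" .
    have "0 < (\<Sum>a\<in>A'. exp (real_of_ereal (f a)))"
      using False finite_subset[OF sub fin_B'] by (intro sum_pos) auto
    with le have "ln (\<Sum>a\<in>A'. exp (real_of_ereal (f a))) \<le> ln (\<Sum>a\<in>B'. exp (real_of_ereal (g a)))"
      by simp
    moreover have "B' \<noteq> {}" using False sub by auto
    ultimately show ?thesis
      using False unfolding lse_def Let_def A'_def[symmetric] B'_def[symmetric] by simp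
  qed
qed

lemma W_mono: "(\<And>x. psi1 x \<le> psi2 x) \<Longrightarrow> W S psi1 CA x \<subseteq> W S psi2 CA x"
  unfolding W_def Phi_def using order_trans by blast

lemma Vrem_mono:
  fixes S :: "'x::finite \<Rightarrow> 'a::finite \<Rightarrow> 'x \<Rightarrow> real"
  assumes S_nonneg: "\<And>x a x'. 0 \<le> S x a x'" and le: "\<And>x. psi1 x \<le> psi2 x"
  shows "Vrem S r w psi1 CA n x \<le> Vrem S r w psi2 CA n x"
proof (induction n arbitrary: x)
  case 0
  then show ?case by simp
next
  case (Suc n)
  have Q_fin: "ereal (r y a) + (\<Sum>x'\<in>UNIV. ereal (S y a x') * Vrem S r w psi CA n x') \<noteq> \<infinity>"
    for psi a y
  proof -
    have "(\<Sum>x'\<in>UNIV. ereal (S y a x') * Vrem S r w psi CA n x') \<noteq> \<infinity>"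
      unfolding sum_Pinfty using Vrem_neq_PInf[of S r w psi CA n] S_nonneg[of y a]
      by (auto simp: not_less[symmetric])
    then show ?thesis by auto
  qed
  show ?case
    unfolding Vrem.simps
  proof (rule lse_mono[OF W_mono[OF le]])
    show "\<forall>a\<in>W S psi1 CA x. ereal (r x a) + (\<Sum>x'\<in>UNIV. ereal (S x a x') * Vrem S r w psi1 CA n x')
        \<le> ereal (r x a) + (\<Sum>x'\<in>UNIV. ereal (S x a x') * Vrem S r w psi2 CA n x')"
      using Suc.IH S_nonneg by (intro ballI add_left_mono sum_mono ereal_mult_left_mono) auto
  qed (use Q_fin in auto)
qed

lemma Vsoft_mono:
  fixes S :: "'x::finite \<Rightarrow> 'a::finite \<Rightarrow> 'x \<Rightarrow> real"
  assumes "\<And>x a x'. 0 \<le> S x a x'" and "\<And>x. psi1 x \<le> psi2 x"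
  shows "Vsoft S r w T psi1 CA t x \<le> Vsoft S r w T psi2 CA t x"
  unfolding Vsoft_def using assms by (rule Vrem_mono)

lemma Fsoft_mono:
  assumes le: "Vsoft S r w T psi1 CA1 t x \<le> Vsoft S r w T psi2 CA2 t x"
  shows "Fsoft S r w T psi1 CA1 psi0 CA0 t x \<le> Fsoft S r w T psi2 CA2 psi0 CA0 t x"
proof (cases "Vsoft S r w T psi1 CA1 t x = -\<infinity>")
  case True
  then show ?thesis unfolding Fsoft_def by simp
next
  case False
  with le have "Vsoft S r w T psi2 CA2 t x \<noteq> -\<infinity>" by auto
  moreover have "real_of_ereal (Vsoft S r w T psi1 CA1 t x) \<le> real_of_ereal (Vsoft S r w T psi2 CA2 t x)"
    using False le Vrem_neq_PInf[of S r w psi2 CA2 "T - t" x] unfolding Vsoft_def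
    by (cases "Vrem S r w psi1 CA1 (T - t) x"; cases "Vrem S r w psi2 CA2 (T - t) x") auto
  ultimately show ?thesis using False unfolding Fsoft_def by simp
qed

lemma Phi_fun_upd_iff:
  "Phi S (psi(y := p)) CA a x \<longleftrightarrow> a \<notin> CA \<and> (\<forall>xh. xh \<noteq> y \<longrightarrow> S x a xh \<le> psi xh) \<and> S x a y \<le> p"
  unfolding Phi_def by (metis fun_upd_apply)

lemma consistent_fun_upd_iff:
  assumes "consistent S T (psi(y := q)) CA D"
  shows "consistent S T (psi(y := p)) CA D \<longleftrightarrow> (\<forall>(xs, as)\<in>D. \<forall>t<T. S (xs t) (as t) y \<le> p)"
  using assms unfolding consistent_def Phi_fun_upd_iff by fast

theorem corollary1:
  fixes S :: "'x::finite \<Rightarrow> 'a::finite \<Rightarrow> 'x \<Rightarrow> real"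
    and r :: "'x \<Rightarrow> 'a \<Rightarrow> real" and w :: "'x \<Rightarrow> real" and T :: nat
    and x0 xstar :: 'x and psi :: "'x \<Rightarrow> real" and CA :: "'a set"
    and D :: "((nat \<Rightarrow> 'x) \<times> (nat \<Rightarrow> 'a)) set"
  assumes S_nonneg: "\<And>x a x'. 0 \<le> S x a x'"
    and S_sum: "\<And>x a. (\<Sum>x'\<in>UNIV. S x a x') = 1"
    and psi_range: "\<And>x. 0 \<le> psi x \<and> psi x \<le> 1"
    and T_pos: "0 < T"
    and D_fin: "finite D" and D_ne: "D \<noteq> {}"
    and D_start: "\<And>xs as. (xs, as) \<in> D \<Longrightarrow> xs 0 = x0"
    and C1_cons: "consistent S T (psi(xstar := 1)) CA D"
  defines "pstar \<equiv> Max ((\<lambda>((xs, as), t). S (xs t) (as t) xstar) ` (D \<times> {..<T}))"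
  shows "(\<forall>p\<in>{0..1}. consistent S T (psi(xstar := p)) CA D \<longleftrightarrow> p \<ge> pstar)
    \<and> (\<forall>p\<in>{0..1}. p \<ge> pstar \<longrightarrow>
          Vsoft S r w T (psi(xstar := pstar)) CA 0 x0 \<le> Vsoft S r w T (psi(xstar := p)) CA 0 x0)
    \<and> (\<forall>psi0 CA0. \<bar>Vsoft S r w T psi0 CA0 0 x0\<bar> \<noteq> \<infinity> \<longrightarrow>
          (\<forall>p\<in>{0..1}. p \<ge> pstar \<longrightarrow>
             Fsoft S r w T (psi(xstar := pstar)) CA psi0 CA0 0 x0
               \<le> Fsoft S r w T (psi(xstar := p)) CA psi0 CA0 0 x0))"
proof -
  let ?M = "(\<lambda>((xs, as), t). S (xs t) (as t) xstar) ` (D \<times> {..<T})"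
  have "finite ?M" "?M \<noteq> {}" using D_fin D_ne T_pos by auto
  then have "pstar \<le> p \<longleftrightarrow> (\<forall>(xs, as)\<in>D. \<forall>t<T. S (xs t) (as t) xstar \<le> p)" for p
    unfolding pstar_def by (subst Max_le_iff) auto
  then have cons_iff: "consistent S T (psi(xstar := p)) CA D \<longleftrightarrow> pstar \<le> p" for p
    using consistent_fun_upd_iff[OF C1_cons] by presburger
  have V_le: "Vsoft S r w T (psi(xstar := pstar)) CA 0 x0 \<le> Vsoft S r w T (psi(xstar := p)) CA 0 x0"
    if "pstar \<le> p" for p
    using S_nonneg that by (intro Vsoft_mono) auto
  show ?thesis using cons_iff V_le Fsoft_mono by blast
qed

end
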